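(* Consider the heterogeneous cone percolation process on $\mathbb{T}_d^+$. If for some positive integer $n$ $$\liminf_{j\to\infty}\ d^n\prod_{k=0}^{n-1}\Big[1-\prod_{i=0}^{k}\mathbb{P}[R_{jn+i}<k+1-i]\Big] > 1,$$ then with positive probability the set $I$ of vertices reached from $\mathcal{O}$ is infinite (the process has a giant component with positive probability).
   Context: Let $d\ge2$, let $\mathbb{T}_d$ be the infinite tree in which every vertex has $d+1$ neighbours, with a fixed origin $\mathcal{O}$; $d(u,v)$ is graph distance and $u\le v$ means $u$ lies on the path from $\mathcal{O}$ to $v$. Fix a neighbour $w$ of $\mathcal{O}$ and let $\mathbb{T}_d^+$ be the subtree obtained by deleting all $x$ with $w\le x$; every vertex of $\mathbb{T}_d^+$ has exactly $d$ children. Heterogeneous cone percolation on $\mathbb{T}_d^+$: let $(R_z)_{z\in\mathbb{N}}$ be independent random variables with values in $\{0,1,2,\dots\}$ and $\mathbb{P}[R_z=0]<1$ for all $z$; let $(\bar R_u)_{u\in\mathbb{T}_d^+}$ be independent random variables with $\bar R_u$ distributed as $R_{d(\mathcal{O},u)}$. Let $B_u=\{v\in\mathbb{T}_d^+: u\le v,\ d(u,v)\le \bar R_u\}$, $I_0=\{\mathcal{O}\}$, $I_{m+1}=\bigcup_{x\in I_m}B_x$, $I=\bigcup_{m\ge0}I_m$. *)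

theory Defs
  imports "HOL-Probability.Probability" "HOL-Library.Sublist"
begin

text \<open>Vertices of the rooted tree T_d^+ in which every vertex has exactly d children:
  finite words over the alphabet {0..<d}. The origin is the empty word, the children of u
  are u @ [a] for a < d, u \<le> v is "u is a prefix of v", d(O,u) = length u, and for
  u \<le> v the graph distance is d(u,v) = length v - length u.\<close>
definition tree_vertices :: "nat \<Rightarrow> nat list set" where
  "tree_vertices d = {u. \<forall>a\<in>set u. a < d}"

text \<open>The set I of vertices reached from the origin, for a given realisation r u of the
  radii Rbar_u: the least set containing the origin and closed under adding the cones
  B_x = {v. x \<le> v, d(x,v) \<le> r x} of its members (this is the union of the I_m).\<close>
inductive_set cone_reached :: "nat \<Rightarrow> (nat list \<Rightarrow> nat) \<Rightarrow> nat list set"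
  for d :: nat and r :: "nat list \<Rightarrow> nat" where
  origin: "[] \<in> cone_reached d r"
| cone: "\<lbrakk>x \<in> cone_reached d r; v \<in> tree_vertices d; prefix x v; length v - length x \<le> r x\<rbrakk>
          \<Longrightarrow> v \<in> cone_reached d r"

end

theory Submission
  imports Defs
begin

text \<open>
  Group the levels into blocks of n. From a vertex u at depth j n, a word w of length n is
  crossed if every vertex of u @ w lies in a cone started at an ancestor inside the block.
  The events "level k of the block is reached" are increasing in the independent radii, so by
  the Harris inequality a block is crossed with probability at least the product in the
  hypothesis. The crossed blocks therefore behave like a branching process whose mean number of
  children eventually exceeds some c > 1. Bounding (1 - \<delta>)^x by its second order Taylor
  polynomial, induction on the number of generations shows that this process survives with
  probability at least \<delta> = 2 (c - 1) / d^(2n) (with c capped at 2). Opening the first levels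
  along one path, which has positive probability because P[R_z > 0] > 0, lets the process start
  where it is supercritical, and letting the number of generations tend to infinity gives an
  infinite reached set with positive probability.
\<close>

section \<open>Reachability along paths\<close>

definition covered :: "(nat list \<Rightarrow> nat) \<Rightarrow> nat list \<Rightarrow> bool" where
  "covered r v \<longleftrightarrow> (\<forall>k<length v. \<exists>i\<le>k. k + 1 - i \<le> r (take i v))"

lemma tree_vertices_take: "v \<in> tree_vertices d \<Longrightarrow> take i v \<in> tree_vertices d"
  unfolding tree_vertices_def by (auto dest: in_set_takeD)

lemma tree_vertices_append:
  "u \<in> tree_vertices d \<Longrightarrow> w \<in> tree_vertices d \<Longrightarrow> u @ w \<in> tree_vertices d"
  by (auto simp: tree_vertices_def)

lemma finite_tree_vertices_length_le: "finite {v \<in> tree_vertices d. length v \<le> m}"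
proof (rule finite_subset)
  show "{v \<in> tree_vertices d. length v \<le> m} \<subseteq> {xs. set xs \<subseteq> {..<d} \<and> length xs \<le> m}"
    by (auto simp: tree_vertices_def)
qed (rule finite_lists_length_le[OF finite_lessThan])

lemma covered_append:
  assumes "covered r u" and "\<forall>k<length w. \<exists>i\<le>k. k + 1 - i \<le> r (u @ take i w)"
  shows "covered r (u @ w)"
  unfolding covered_def
proof (intro allI impI)
  fix k assume k: "k < length (u @ w)"
  show "\<exists>i\<le>k. k + 1 - i \<le> r (take i (u @ w))"
  proof (cases "k < length u")
    case True
    with assms(1) obtain i where "i \<le> k" "k + 1 - i \<le> r (take i u)"
      unfolding covered_def by blast
    with True show ?thesis by (intro exI[of _ i]) auto
  next
    case False
    with k assms(2) obtain i where i: "i \<le> k - length u" "k - length u + 1 - i \<le> r (u @ take i w)"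
      by (metis add_diff_inverse_nat add_less_cancel_left length_append)
    with False show ?thesis by (intro exI[of _ "length u + i"]) auto
  qed
qed

lemma covered_take: "covered r v \<Longrightarrow> covered r (take m v)"
  unfolding covered_def
  by (metis (no_types, lifting) length_take min_less_iff_conj order.strict_trans1 take_take
      min.absorb1 less_imp_le_nat)

lemma cone_reached_imp_covered:
  "v \<in> cone_reached d r \<Longrightarrow> v \<in> tree_vertices d \<and> covered r v"
proof (induction rule: cone_reached.induct)
  case origin
  then show ?case by (simp add: tree_vertices_def covered_def)
next
  case (cone x v)
  then obtain w where v: "v = x @ w" by (auto simp: prefix_def)
  have "covered r (x @ w)"
    using cone by (intro covered_append) (auto simp: v intro!: exI[of _ 0])
  with cone v show ?case by simp
qed

lemma covered_imp_cone_reached: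
  assumes "v \<in> tree_vertices d" "covered r v"
  shows "take k v \<in> cone_reached d r"
proof (induction k rule: less_induct)
  case (less k)
  show ?case
  proof (cases "k = 0 \<or> length v < k")
    case True
    then show ?thesis
    proof
      assume "length v < k"
      then have "take k v = take (length v) v" by simp
      with less show ?thesis by (metis lessI \<open>length v < k\<close>)
    qed (simp add: cone_reached.origin)
  next
    case False
    then obtain k' where k: "k = Suc k'" "k' < length v" by (cases k) auto
    then obtain i where i: "i \<le> k'" "k' + 1 - i \<le> r (take i v)"
      using assms(2) unfolding covered_def by blast
    show ?thesis
    proof (rule cone_reached.cone)
      show "take i v \<in> cone_reached d r" using less i k by simp
      show "take k v \<in> tree_vertices d" using assms(1) by (rule tree_vertices_take)
      show "prefix (take i v) (take k v)"
        using i k by (metis le_SucI min.absorb1 take_is_prefix take_take)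
      show "length (take k v) - length (take i v) \<le> r (take i v)" using i k by simp
    qed
  qed
qed

lemma cone_reached_iff_covered:
  "v \<in> cone_reached d r \<longleftrightarrow> v \<in> tree_vertices d \<and> covered r v"
  using cone_reached_imp_covered covered_imp_cone_reached[of v d r "length v"] by auto

lemma infinite_cone_reached_iff:
  "infinite (cone_reached d r) \<longleftrightarrow> (\<forall>m. \<exists>v\<in>tree_vertices d. length v = m \<and> covered r v)"
proof
  assume inf: "infinite (cone_reached d r)"
  show "\<forall>m. \<exists>v\<in>tree_vertices d. length v = m \<and> covered r v"
  proof
    fix m
    have "\<not> cone_reached d r \<subseteq> {v \<in> tree_vertices d. length v \<le> m}"
      using inf finite_tree_vertices_length_le finite_subset by blast
    then obtain v where "v \<in> tree_vertices d" "covered r v" "m < length v"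
      using cone_reached_iff_covered by fastforce
    then show "\<exists>v\<in>tree_vertices d. length v = m \<and> covered r v"
      by (intro bexI[of _ "take m v"]) (auto intro: tree_vertices_take covered_take)
  qed
next
  assume H: "\<forall>m. \<exists>v\<in>tree_vertices d. length v = m \<and> covered r v"
  show "infinite (cone_reached d r)"
  proof
    assume "finite (cone_reached d r)"
    then have "finite (length ` cone_reached d r)" by simp
    then obtain m where "\<forall>v\<in>cone_reached d r. length v < m"
      by (meson finite_nat_bounded image_subset_iff lessThan_iff)
    moreover obtain v where "v \<in> tree_vertices d" "length v = m" "covered r v" using H by blast
    ultimately show False using cone_reached_iff_covered by blast
  qed
qed

section \<open>Events determined by finitely many radii\<close>

definition depends_only_on :: "'i set \<Rightarrow> (('i \<Rightarrow> 'b) \<Rightarrow> bool) \<Rightarrow> bool" where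
  "depends_only_on S P \<longleftrightarrow> (\<forall>r r'. (\<forall>v\<in>S. r v = r' v) \<longrightarrow> P r = P r')"

lemma depends_only_onI:
  "(\<And>r r'. (\<And>v. v \<in> S \<Longrightarrow> r v = r' v) \<Longrightarrow> P r = P r') \<Longrightarrow> depends_only_on S P"
  unfolding depends_only_on_def by blast

lemma depends_only_on_restrict: "depends_only_on S P \<Longrightarrow> P (restrict r S) = P r"
  unfolding depends_only_on_def by auto

lemma depends_only_on_mono: "depends_only_on S P \<Longrightarrow> S \<subseteq> S' \<Longrightarrow> depends_only_on S' P"
  unfolding depends_only_on_def by blast

lemma depends_only_on_Ball:
  "(\<And>k. k \<in> K \<Longrightarrow> depends_only_on S (P k)) \<Longrightarrow> depends_only_on S (\<lambda>r. \<forall>k\<in>K. P k r)"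
  unfolding depends_only_on_def by blast

lemma depends_only_on_conj:
  "depends_only_on S P \<Longrightarrow> depends_only_on S Q \<Longrightarrow> depends_only_on S (\<lambda>r. P r \<and> Q r)"
  unfolding depends_only_on_def by blast

lemma depends_only_on_not: "depends_only_on S P \<Longrightarrow> depends_only_on S (\<lambda>r. \<not> P r)"
  unfolding depends_only_on_def by blast

lemma depends_only_on_fun_upd:
  "depends_only_on (insert x S) P \<Longrightarrow> depends_only_on S (\<lambda>r. P (r(x := a)))"
  unfolding depends_only_on_def by (metis fun_upd_apply insert_iff)

lemma mono_fun_upd_arg:
  fixes P :: "('i \<Rightarrow> 'b::order) \<Rightarrow> 'c::order"
  shows "mono P \<Longrightarrow> mono (\<lambda>r. P (r(x := a)))"
  by (rule monoI, erule monoD) (simp add: le_fun_def)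

lemma mono_fun_upd_value:
  fixes P :: "('i \<Rightarrow> 'b::order) \<Rightarrow> 'c::order"
  shows "mono P \<Longrightarrow> mono (\<lambda>a. P (r(x := a)))"
  by (rule monoI, erule monoD) (simp add: le_fun_def)

lemma truncation_invariant_fun_upd:
  fixes P :: "('i \<Rightarrow> 'b::linorder) \<Rightarrow> bool"
  assumes "\<And>r. P (\<lambda>v. min N (r v)) = P r"
  shows "P ((\<lambda>v. min N (r v))(x := a)) = P (r(x := a))"
proof -
  have "(\<lambda>v. min N (((\<lambda>v. min N (r v))(x := a)) v)) = (\<lambda>v. min N ((r(x := a)) v))"
    by (auto simp: fun_eq_iff min.left_idem)
  then show ?thesis by (metis assms)
qed

lemma weighted_Chebyshev_sum:
  fixes y f g :: "'a::linorder \<Rightarrow> real"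
  assumes "finite A" "\<And>a. a \<in> A \<Longrightarrow> 0 \<le> y a" "sum y A = 1" "mono f" "mono g"
  shows "(\<Sum>a\<in>A. y a * f a) * (\<Sum>a\<in>A. y a * g a) \<le> (\<Sum>a\<in>A. y a * (f a * g a))"
proof -
  have same_sign: "0 \<le> (f a - f b) * (g a - g b)" for a b
  proof (cases "a \<le> b")
    case True
    then show ?thesis using assms(4,5) by (intro mult_nonpos_nonpos) (auto dest: monoD)
  next
    case False
    then have "b \<le> a" by simp
    then show ?thesis using assms(4,5) by (intro mult_nonneg_nonneg) (auto dest: monoD)
  qed
  have "0 \<le> (\<Sum>a\<in>A. \<Sum>b\<in>A. y a * y b * ((f a - f b) * (g a - g b)))"
    using assms(2) same_sign by (intro sum_nonneg) (metis mult_nonneg_nonneg)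
  also have "\<dots> = (\<Sum>a\<in>A. y a * (f a * g a)) * sum y A + sum y A * (\<Sum>b\<in>A. y b * (f b * g b))
      - (\<Sum>a\<in>A. y a * f a) * (\<Sum>b\<in>A. y b * g b) - (\<Sum>a\<in>A. y a * g a) * (\<Sum>b\<in>A. y b * f b)"
  proof -
    have "y a * y b * ((f a - f b) * (g a - g b)) = (y a * (f a * g a)) * y b + y a * (y b * (f b * g b))
       - (y a * f a) * (y b * g b) - (y a * g a) * (y b * f b)" for a b
      by (simp add: algebra_simps)
    then show ?thesis by (simp only: sum.distrib sum_subtractf sum_product)
  qed
  finally show ?thesis using assms(3) by simp
qed

lemma weighted_Chebyshev_prod:
  fixes y :: "'a::linorder \<Rightarrow> real" and h :: "'k \<Rightarrow> 'a \<Rightarrow> real"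
  assumes "finite A" "\<And>a. a \<in> A \<Longrightarrow> 0 \<le> y a" "sum y A = 1" "finite K"
    and "\<And>k. k \<in> K \<Longrightarrow> mono (h k)" "\<And>k a. k \<in> K \<Longrightarrow> 0 \<le> h k a"
  shows "(\<Prod>k\<in>K. \<Sum>a\<in>A. y a * h k a) \<le> (\<Sum>a\<in>A. y a * (\<Prod>k\<in>K. h k a))"
  using assms(4-6)
proof (induction K rule: finite_induct)
  case empty
  then show ?case using assms(3) by simp
next
  case (insert k K)
  have "(\<Prod>k\<in>insert k K. \<Sum>a\<in>A. y a * h k a) = (\<Sum>a\<in>A. y a * h k a) * (\<Prod>k\<in>K. \<Sum>a\<in>A. y a * h k a)"
    using insert by simp
  also have "\<dots> \<le> (\<Sum>a\<in>A. y a * h k a) * (\<Sum>a\<in>A. y a * (\<Prod>k\<in>K. h k a))"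
    using insert assms(2) by (intro mult_left_mono sum_nonneg mult_nonneg_nonneg) auto
  also have "\<dots> \<le> (\<Sum>a\<in>A. y a * (h k a * (\<Prod>k\<in>K. h k a)))"
  proof (rule weighted_Chebyshev_sum[OF assms(1-3)])
    show "mono (h k)" by (simp add: insert.prems)
    show "mono (\<lambda>a. \<Prod>k\<in>K. h k a)"
      using insert.prems by (intro monoI prod_mono) (auto dest: monoD)
  qed
  also have "\<dots> = (\<Sum>a\<in>A. y a * (\<Prod>k\<in>insert k K. h k a))"
    using insert by simp
  finally show ?case .
qed

locale nat_indep_family = prob_space M for M :: "'a measure" +
  fixes X :: "'i \<Rightarrow> 'a \<Rightarrow> nat" and I :: "'i set"
  assumes indep: "indep_vars (\<lambda>_. count_space UNIV) X I"
begin

abbreviation pred_event :: "(('i \<Rightarrow> nat) \<Rightarrow> bool) \<Rightarrow> 'a set" where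
  "pred_event P \<equiv> {\<omega> \<in> space M. P (\<lambda>i. X i \<omega>)}"

lemma measurable_X: "i \<in> I \<Longrightarrow> X i \<in> measurable M (count_space UNIV)"
  using indep unfolding indep_vars_def by auto

lemma measurable_restrict_X:
  assumes "finite S" "S \<subseteq> I"
  shows "(\<lambda>\<omega>. restrict (\<lambda>i. X i \<omega>) S) \<in> measurable M (PiM S (\<lambda>_. count_space UNIV))"
  using assms measurable_X by (intro measurable_restrict) auto

lemma measurable_from_finite_PiM_count_space:
  assumes "finite S"
  shows "P \<in> measurable (PiM S (\<lambda>_. count_space (UNIV :: nat set))) (count_space UNIV)"
  using assms by (simp add: count_space_PiM_finite)

lemma pred_event_in_events:
  assumes "finite S" "S \<subseteq> I" "depends_only_on S P"
  shows "pred_event P \<in> events"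
proof -
  have "(\<lambda>\<omega>. P (restrict (\<lambda>i. X i \<omega>) S)) \<in> measurable M (count_space UNIV)"
    using measurable_from_finite_PiM_count_space[OF assms(1)] measurable_restrict_X[OF assms(1,2)]
    by (rule measurable_compose[rotated])
  then have "{\<omega> \<in> space M. P (restrict (\<lambda>i. X i \<omega>) S)} \<in> events"
    by (simp add: pred_def)
  then show ?thesis using depends_only_on_restrict[OF assms(3)] by simp
qed

lemma prob_Ball_indep:
  fixes L :: "'l set" and K :: "'l \<Rightarrow> 'i set"
  assumes "finite L" "L \<noteq> {}"
    and "\<And>l. l \<in> L \<Longrightarrow> finite (K l)" "\<And>l. l \<in> L \<Longrightarrow> K l \<subseteq> I"
    and "disjoint_family_on K L"
    and dep: "\<And>l. l \<in> L \<Longrightarrow> depends_only_on (K l) (\<Phi> l)"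
  shows "prob (pred_event (\<lambda>r. \<forall>l\<in>L. \<Phi> l r)) = (\<Prod>l\<in>L. prob (pred_event (\<Phi> l)))"
proof -
  let ?Y = "\<lambda>l \<omega>. \<Phi> l (restrict (\<lambda>i. X i \<omega>) (K l))"
  have "indep_vars (\<lambda>l. PiM (K l) (\<lambda>_. count_space UNIV)) (\<lambda>l \<omega>. restrict (\<lambda>i. X i \<omega>) (K l)) L"
    using indep_vars_restrict[OF indep, of L K] assms(4,5) by blast
  then have "indep_vars (\<lambda>_. count_space UNIV) ?Y L"
    by (rule indep_vars_compose2) (use assms(3) measurable_from_finite_PiM_count_space in blast)
  then have "prob (\<Inter>l\<in>L. ?Y l -` {True} \<inter> space M) = (\<Prod>l\<in>L. prob (?Y l -` {True} \<inter> space M))"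
    by (rule indep_varsD[OF _ assms(2,1)]) simp_all
  moreover have "?Y l -` {True} \<inter> space M = pred_event (\<Phi> l)" if "l \<in> L" for l
    using depends_only_on_restrict[OF dep[OF that]] by blast
  moreover have "(\<Inter>l\<in>L. pred_event (\<Phi> l)) = pred_event (\<lambda>r. \<forall>l\<in>L. \<Phi> l r)"
    using assms(2) by blast
  ultimately show ?thesis by simp
qed

lemma prob_conj_indep:
  assumes "finite S" "finite T" "S \<subseteq> I" "T \<subseteq> I" "S \<inter> T = {}"
    and "depends_only_on S P" "depends_only_on T Q"
  shows "prob (pred_event (\<lambda>r. P r \<and> Q r)) = prob (pred_event P) * prob (pred_event Q)"
proof -
  have "prob (pred_event (\<lambda>r. \<forall>b\<in>UNIV. (if b then P else Q) r)) =
      (\<Prod>b\<in>UNIV. prob (pred_event (if b then P else Q)))"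
    by (rule prob_Ball_indep[where K="\<lambda>b. if b then S else T"])
       (use assms in \<open>auto simp: disjoint_family_on_def\<close>)
  moreover have "pred_event (\<lambda>r. \<forall>b\<in>UNIV. (if b then P else Q) r) = pred_event (\<lambda>r. P r \<and> Q r)"
    by (auto simp: UNIV_bool)
  ultimately show ?thesis by (simp add: UNIV_bool mult.commute)
qed

lemma prob_eq_sum_level_sets:
  assumes "finite T" "A \<in> events" "\<And>t. t \<in> T \<Longrightarrow> {\<omega>\<in>space M. Y \<omega> = t} \<in> events"
    and "\<And>\<omega>. \<omega> \<in> space M \<Longrightarrow> Y \<omega> \<in> T"
  shows "prob A = (\<Sum>t\<in>T. prob (A \<inter> {\<omega>\<in>space M. Y \<omega> = t}))"
proof -
  have "A = (\<Union>t\<in>T. A \<inter> {\<omega>\<in>space M. Y \<omega> = t})"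
    using assms(4) sets.sets_into_space[OF assms(2)] by auto
  also have "prob \<dots> = (\<Sum>t\<in>T. prob (A \<inter> {\<omega>\<in>space M. Y \<omega> = t}))"
    using assms by (intro finite_measure_finite_Union) (auto simp: disjoint_family_on_def)
  finally show ?thesis .
qed

lemma prob_condition_on_coordinate:
  assumes "finite S" "insert x S \<subseteq> I" "x \<notin> S"
    and dep: "depends_only_on (insert x S) P" and trunc: "\<And>r. P (\<lambda>v. min N (r v)) = P r"
  shows "prob (pred_event P) =
    (\<Sum>a\<le>N. prob {\<omega>\<in>space M. min N (X x \<omega>) = a} * prob (pred_event (\<lambda>r. P (r(x := a)))))"
proof -
  have level_event: "depends_only_on {x} (\<lambda>r. min N (r x) = a)" for a
    by (rule depends_only_onI) simp
  have level_in_events: "{\<omega>\<in>space M. min N (X x \<omega>) = a} \<in> events" for a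
    using pred_event_in_events[OF _ _ level_event] assms(2) by simp
  have "prob (pred_event P) = (\<Sum>a\<le>N. prob (pred_event P \<inter> {\<omega>\<in>space M. min N (X x \<omega>) = a}))"
    using assms(1,2) level_in_events
    by (intro prob_eq_sum_level_sets pred_event_in_events[OF _ _ dep]) auto
  also have "\<dots> = (\<Sum>a\<le>N. prob (pred_event (\<lambda>r. min N (r x) = a \<and> P (r(x := a)))))"
  proof (rule sum.cong[OF refl])
    fix a assume "a \<in> {..N}"
    have fix_level: "P r \<longleftrightarrow> P (r(x := a))" if "min N (r x) = a" for r
    proof -
      have "P r = P (\<lambda>v. min N (r v))" by (rule trunc[symmetric])
      also have "(\<lambda>v. min N (r v)) = (\<lambda>v. min N ((r(x := a)) v))"
        using that by auto
      also have "P \<dots> = P (r(x := a))" by (rule trunc)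
      finally show ?thesis .
    qed
    have "pred_event P \<inter> {\<omega>\<in>space M. min N (X x \<omega>) = a} =
        pred_event (\<lambda>r. min N (r x) = a \<and> P (r(x := a)))"
    proof (rule set_eqI)
      fix \<omega>
      show "\<omega> \<in> pred_event P \<inter> {\<omega>\<in>space M. min N (X x \<omega>) = a} \<longleftrightarrow>
          \<omega> \<in> pred_event (\<lambda>r. min N (r x) = a \<and> P (r(x := a)))"
        using fix_level[of "\<lambda>i. X i \<omega>"] by auto
    qed
    then show "prob (pred_event P \<inter> {\<omega>\<in>space M. min N (X x \<omega>) = a}) =
        prob (pred_event (\<lambda>r. min N (r x) = a \<and> P (r(x := a))))" by simp
  qed
  also have "\<dots> = (\<Sum>a\<le>N. prob {\<omega>\<in>space M. min N (X x \<omega>) = a} * prob (pred_event (\<lambda>r. P (r(x := a)))))"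
  proof (rule sum.cong[OF refl])
    fix a
    show "prob (pred_event (\<lambda>r. min N (r x) = a \<and> P (r(x := a)))) =
        prob {\<omega>\<in>space M. min N (X x \<omega>) = a} * prob (pred_event (\<lambda>r. P (r(x := a))))"
      by (rule prob_conj_indep[OF _ assms(1) _ _ _ level_event depends_only_on_fun_upd[OF dep]])
        (use assms(2,3) in auto)
  qed
  finally show ?thesis .
qed

lemma prob_Ball_ge_prod_constant_events:
  assumes "finite K" "\<And>k. k \<in> K \<Longrightarrow> depends_only_on {} (\<Phi> k)"
  shows "(\<Prod>k\<in>K. prob (pred_event (\<Phi> k))) \<le> prob (pred_event (\<lambda>r. \<forall>k\<in>K. \<Phi> k r))"
proof -
  define c where "c k = \<Phi> k (\<lambda>_. 0)" for k
  have constant_value: "\<Phi> k r = c k" if "k \<in> K" for k r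
    using assms(2)[OF that] unfolding depends_only_on_def c_def by blast
  then have event_trivial: "pred_event (\<Phi> k) = (if c k then space M else {})" if "k \<in> K" for k
    using that by auto
  show ?thesis
  proof (cases "\<forall>k\<in>K. c k")
    case True
    then have "pred_event (\<lambda>r. \<forall>k\<in>K. \<Phi> k r) = space M" using constant_value by auto
    then show ?thesis using True event_trivial by (simp add: prob_space)
  next
    case False
    then obtain k where k: "k \<in> K" "\<not> c k" by blast
    then have "prob (pred_event (\<Phi> k)) = 0" using event_trivial by simp
    then have "(\<Prod>k\<in>K. prob (pred_event (\<Phi> k))) = 0"
      using k assms(1) by (metis (no_types, lifting) prod_zero)
    then show ?thesis by simp
  qed
qed

lemma mono_prob_fun_upd:
  assumes "finite S" "insert x S \<subseteq> I" "depends_only_on (insert x S) P" "mono P"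
  shows "mono (\<lambda>a. prob (pred_event (\<lambda>r. P (r(x := a)))))"
proof (rule monoI)
  fix a b :: nat assume "a \<le> b"
  then have "P (r(x := a)) \<Longrightarrow> P (r(x := b))" for r
    using le_boolD[OF monoD[OF mono_fun_upd_value[OF assms(4)]]] by blast
  then have "pred_event (\<lambda>r. P (r(x := a))) \<subseteq> pred_event (\<lambda>r. P (r(x := b)))"
    by blast
  moreover have "pred_event (\<lambda>r. P (r(x := b))) \<in> events"
    using assms(2) by (intro pred_event_in_events[OF assms(1) _ depends_only_on_fun_upd[OF assms(3)]]) auto
  ultimately show "prob (pred_event (\<lambda>r. P (r(x := a)))) \<le> prob (pred_event (\<lambda>r. P (r(x := b))))"
    by (rule finite_measure_mono)
qed

text \<open>The truncation hypothesis lets each event see only the values 0..N of every radius, so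
  conditioning on one coordinate is a finite sum.\<close>

lemma Harris_inequality:
  assumes "finite S" "S \<subseteq> I" "finite K"
    and "\<And>k. k \<in> K \<Longrightarrow> depends_only_on S (\<Phi> k)"
    and "\<And>k. k \<in> K \<Longrightarrow> mono (\<Phi> k)"
    and "\<And>k r. k \<in> K \<Longrightarrow> \<Phi> k (\<lambda>v. min N (r v)) = \<Phi> k r"
  shows "(\<Prod>k\<in>K. prob (pred_event (\<Phi> k))) \<le> prob (pred_event (\<lambda>r. \<forall>k\<in>K. \<Phi> k r))"
  using assms(1,2,4-6)
proof (induction S arbitrary: \<Phi> rule: finite_induct)
  case empty
  show ?case using assms(3) empty.prems(2) by (rule prob_Ball_ge_prod_constant_events)
next
  case (insert x S)
  define y where "y a = prob {\<omega>\<in>space M. min N (X x \<omega>) = a}" for a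
  define h where "h k a = prob (pred_event (\<lambda>r. \<Phi> k (r(x := a))))" for k a
  have condition: "prob (pred_event P) = (\<Sum>a\<le>N. y a * prob (pred_event (\<lambda>r. P (r(x := a)))))"
    if "depends_only_on (insert x S) P" "\<And>r. P (\<lambda>v. min N (r v)) = P r" for P
    unfolding y_def by (rule prob_condition_on_coordinate) (use insert that in auto)
  have y_sum: "sum y {..N} = 1"
    using condition[of "\<lambda>_. True"] by (simp add: prob_space depends_only_on_def)
  have h_mono: "mono (h k)" if "k \<in> K" for k
    unfolding h_def using insert.prems(1)
    by (intro mono_prob_fun_upd[OF insert.hyps(1) _ insert.prems(2,3)[OF that]]) auto
  have "(\<Prod>k\<in>K. prob (pred_event (\<Phi> k))) = (\<Prod>k\<in>K. \<Sum>a\<le>N. y a * h k a)"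
    unfolding h_def by (rule prod.cong[OF refl], rule condition) (use insert.prems in auto)
  also have "\<dots> \<le> (\<Sum>a\<le>N. y a * (\<Prod>k\<in>K. h k a))"
    by (rule weighted_Chebyshev_prod[OF _ _ y_sum assms(3) h_mono]) (auto simp: y_def h_def)
  also have "\<dots> \<le> (\<Sum>a\<le>N. y a * prob (pred_event (\<lambda>r. \<forall>k\<in>K. \<Phi> k (r(x := a)))))"
  proof (rule sum_mono, rule mult_left_mono)
    fix a
    show "(\<Prod>k\<in>K. h k a) \<le> prob (pred_event (\<lambda>r. \<forall>k\<in>K. \<Phi> k (r(x := a))))"
      unfolding h_def
    proof (rule insert.IH)
      show "S \<subseteq> I" using insert.prems(1) by simp
      show "depends_only_on S (\<lambda>r. \<Phi> k (r(x := a)))" if "k \<in> K" for k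
        using insert.prems(2)[OF that] by (rule depends_only_on_fun_upd)
      show "mono (\<lambda>r. \<Phi> k (r(x := a)))" if "k \<in> K" for k
        using insert.prems(3)[OF that] by (rule mono_fun_upd_arg)
      show "\<Phi> k ((\<lambda>v. min N (r v))(x := a)) = \<Phi> k (r(x := a))" if "k \<in> K" for k r
        using insert.prems(4)[OF that] by (rule truncation_invariant_fun_upd)
    qed
  qed (simp add: y_def)
  also have "\<dots> = prob (pred_event (\<lambda>r. \<forall>k\<in>K. \<Phi> k r))"
    by (rule condition[symmetric]) (use insert.prems in \<open>auto intro: depends_only_on_Ball\<close>)
  finally show ?case .
qed

end

section \<open>Blocks of n consecutive levels\<close>

definition block_words :: "nat \<Rightarrow> nat \<Rightarrow> nat list set" where
  "block_words d n = {w \<in> tree_vertices d. length w = n}"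

definition crosses_block :: "nat \<Rightarrow> (nat list \<Rightarrow> nat) \<Rightarrow> nat list \<Rightarrow> nat list \<Rightarrow> bool" where
  "crosses_block n r u w \<longleftrightarrow> (\<forall>k<n. \<exists>i\<le>k. k + 1 - i \<le> r (u @ take i w))"

fun block_survives :: "nat \<Rightarrow> nat \<Rightarrow> nat \<Rightarrow> (nat list \<Rightarrow> nat) \<Rightarrow> nat list \<Rightarrow> bool" where
  "block_survives d n 0 r u = True"
| "block_survives d n (Suc m) r u =
    (\<exists>w\<in>block_words d n. crosses_block n r u w \<and> block_survives d n m r (u @ w))"

definition block_region :: "nat \<Rightarrow> nat \<Rightarrow> nat \<Rightarrow> nat list \<Rightarrow> nat list set" where
  "block_region d n m u = (\<lambda>x. u @ x) ` {x \<in> tree_vertices d. length x < m * n}"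

lemma finite_block_words: "finite (block_words d n)"
  unfolding block_words_def
  by (rule finite_subset[OF _ finite_tree_vertices_length_le[of d n]]) auto

lemma card_block_words: "card (block_words d n) = d ^ n"
proof -
  have "block_words d n = {xs. set xs \<subseteq> {..<d} \<and> length xs = n}"
    by (auto simp: block_words_def tree_vertices_def)
  then show ?thesis by (simp add: card_lists_length_eq)
qed

lemma finite_block_region: "finite (block_region d n m u)"
  unfolding block_region_def
  by (rule finite_imageI, rule finite_subset[OF _ finite_tree_vertices_length_le[of d "m * n"]]) auto

lemma block_region_subset: "u \<in> tree_vertices d \<Longrightarrow> block_region d n m u \<subseteq> tree_vertices d"
  unfolding block_region_def using tree_vertices_append by blast

lemma block_regions_disjoint_siblings:
  assumes "w \<in> block_words d n" "w' \<in> block_words d n" "w \<noteq> w'"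
  shows "block_region d n m (u @ w) \<inter> block_region d n m' (u @ w') = {}"
proof -
  have "u @ w @ x \<noteq> u @ w' @ x'" for x x'
  proof
    assume "u @ w @ x = u @ w' @ x'"
    then have "take n (w @ x) = take n (w' @ x')" by simp
    with assms show False by (simp add: block_words_def)
  qed
  then show ?thesis unfolding block_region_def by auto
qed

lemma block_regions_disjoint_child:
  "w \<in> block_words d n \<Longrightarrow> block_region d n 1 u \<inter> block_region d n m (u @ w) = {}"
  by (auto simp: block_region_def block_words_def)

lemma crosses_block_depends_only_on:
  assumes "w \<in> block_words d n"
  shows "depends_only_on (block_region d n 1 u) (\<lambda>r. crosses_block n r u w)"
proof (rule depends_only_onI)
  fix r r' :: "nat list \<Rightarrow> nat"
  assume eq: "\<And>v. v \<in> block_region d n 1 u \<Longrightarrow> r v = r' v"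
  have "r (u @ take i w) = r' (u @ take i w)" if "i < n" for i
    using assms that by (intro eq) (auto simp: block_region_def block_words_def tree_vertices_take)
  then show "crosses_block n r u w = crosses_block n r' u w"
    unfolding crosses_block_def by (metis le_less_trans)
qed

lemma block_survives_depends_only_on:
  "depends_only_on (block_region d n m u) (\<lambda>r. block_survives d n m r u)"
proof (induction m arbitrary: u)
  case 0
  then show ?case by (simp add: depends_only_on_def)
next
  case (Suc m)
  show ?case
  proof (rule depends_only_onI)
    fix r r' :: "nat list \<Rightarrow> nat"
    assume eq: "\<And>v. v \<in> block_region d n (Suc m) u \<Longrightarrow> r v = r' v"
    have "block_region d n 1 u \<subseteq> block_region d n (Suc m) u"
      by (auto simp: block_region_def)
    then have "crosses_block n r u w = crosses_block n r' u w" if "w \<in> block_words d n" for w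
      using crosses_block_depends_only_on[OF that] eq unfolding depends_only_on_def by blast
    moreover have "block_region d n m (u @ w) \<subseteq> block_region d n (Suc m) u" if "w \<in> block_words d n" for w
      using that by (auto simp: block_region_def block_words_def intro!: image_eqI[of _ _ "w @ x" for x] tree_vertices_append)
    then have "block_survives d n m r (u @ w) = block_survives d n m r' (u @ w)" if "w \<in> block_words d n" for w
      using Suc.IH[of "u @ w"] eq that unfolding depends_only_on_def by blast
    ultimately show "block_survives d n (Suc m) r u = block_survives d n (Suc m) r' u"
      by auto
  qed
qed

lemma block_survives_Suc_imp: "block_survives d n (Suc m) r u \<Longrightarrow> block_survives d n m r u"
proof (induction m arbitrary: u)
  case (Suc m)
  then obtain w where w: "w \<in> block_words d n" "crosses_block n r u w"
    and survives: "block_survives d n (Suc m) r (u @ w)"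
    by (simp only: block_survives.simps) blast
  from survives have "block_survives d n m r (u @ w)" by (rule Suc.IH)
  with w show ?case by auto
qed simp

lemma block_survives_imp_covered:
  assumes "u \<in> tree_vertices d" "covered r u" "block_survives d n m r u"
  shows "\<exists>v\<in>tree_vertices d. length v = length u + m * n \<and> covered r v"
  using assms
proof (induction m arbitrary: u)
  case (Suc m)
  then obtain w where w: "w \<in> block_words d n" "crosses_block n r u w" "block_survives d n m r (u @ w)"
    by auto
  have "u @ w \<in> tree_vertices d" "covered r (u @ w)"
    using Suc.prems w by (auto simp: block_words_def crosses_block_def intro: tree_vertices_append covered_append)
  with Suc.IH w(3) obtain v where "v \<in> tree_vertices d" "length v = length (u @ w) + m * n" "covered r v"
    by blast
  with w(1) show ?case by (intro bexI[of _ v]) (auto simp: block_words_def)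
qed auto

definition offspring :: "nat \<Rightarrow> nat \<Rightarrow> (nat list \<Rightarrow> nat) \<Rightarrow> nat list \<Rightarrow> nat list set" where
  "offspring d n r u = {w \<in> block_words d n. crosses_block n r u w}"

lemma offspring_subset: "offspring d n r u \<subseteq> block_words d n"
  by (auto simp: offspring_def)

lemma offspring_depends_only_on:
  "depends_only_on (block_region d n 1 u) (\<lambda>r. offspring d n r u = S)"
  using crosses_block_depends_only_on unfolding depends_only_on_def offspring_def
  by (smt (verit, best) Collect_cong)

lemma block_survives_Suc_iff_offspring:
  "block_survives d n (Suc m) r u \<longleftrightarrow> (\<exists>w\<in>offspring d n r u. block_survives d n m r (u @ w))"
  by (auto simp: offspring_def)

definition open_zero_path :: "nat \<Rightarrow> (nat list \<Rightarrow> nat) \<Rightarrow> bool" where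
  "open_zero_path k r \<longleftrightarrow> (\<forall>i<k. 1 \<le> r (replicate i 0))"

lemma open_zero_path_depends_only_on:
  "depends_only_on ((\<lambda>i. replicate i 0) ` {..<k}) (open_zero_path k)"
  unfolding depends_only_on_def open_zero_path_def by auto

lemma zero_path_subset_tree_vertices:
  "0 < d \<Longrightarrow> (\<lambda>i. replicate i 0) ` A \<subseteq> tree_vertices d"
  by (auto simp: tree_vertices_def)

lemma covered_if_open_zero_path: "open_zero_path k r \<Longrightarrow> covered r (replicate k 0)"
  unfolding covered_def open_zero_path_def
proof (intro allI impI)
  fix i assume "\<forall>i<k. 1 \<le> r (replicate i 0)" "i < length (replicate k (0::nat))"
  then show "\<exists>i'\<le>i. i + 1 - i' \<le> r (take i' (replicate k 0))"
    by (intro exI[of _ i]) auto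
qed

lemma infinite_cone_reached_if_block_survives:
  assumes "0 < n" "u \<in> tree_vertices d" "covered r u" "\<And>m. block_survives d n m r u"
  shows "infinite (cone_reached d r)"
  unfolding infinite_cone_reached_iff
proof
  fix m
  obtain v where v: "v \<in> tree_vertices d" "length v = length u + m * n" "covered r v"
    using block_survives_imp_covered[OF assms(2,3,4)] by blast
  moreover have "m \<le> length v" using v(2) assms(1) by (simp add: trans_le_add2)
  ultimately show "\<exists>v\<in>tree_vertices d. length v = m \<and> covered r v"
    by (intro bexI[of _ "take m v"]) (auto intro: tree_vertices_take covered_take)
qed

section \<open>Survival of a supercritical branching process\<close>

lemma liminf_gt_one_eventually_ge:
  fixes f :: "nat \<Rightarrow> real"
  assumes "liminf (\<lambda>j. ereal (f j)) > 1"
  obtains c J where "1 < c" "\<And>j. J \<le> j \<Longrightarrow> c \<le> f j"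
proof -
  obtain c where c: "1 < ereal c" "ereal c < liminf (\<lambda>j. ereal (f j))"
    using ereal_dense2[OF assms] by blast
  then have "\<forall>\<^sub>F j in sequentially. c < f j"
    using less_LiminfD by fastforce
  then obtain J where "\<And>j. J \<le> j \<Longrightarrow> c < f j"
    unfolding eventually_sequentially by blast
  with c(1) show ?thesis by (intro that[of c J]) (auto intro: less_imp_le)
qed

lemma supercritical_margin:
  fixes c D :: real
  assumes "1 < c" "2 \<le> D"
  obtains \<delta> where "0 < \<delta>" "\<delta> \<le> 1" "1 + \<delta> * D ^ 2 / 2 \<le> c"
proof
  let ?\<delta> = "2 * (min c 2 - 1) / D ^ 2"
  have "4 \<le> D ^ 2" using power_mono[OF assms(2), of 2] by simp
  then show "0 < ?\<delta>" "?\<delta> \<le> 1" using assms by (auto simp: field_simps)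
  show "1 + ?\<delta> * D ^ 2 / 2 \<le> c" using assms by (auto simp: min_def field_simps)
qed

lemma one_minus_power_le:
  fixes \<delta> :: real
  assumes "0 \<le> \<delta>" "\<delta> \<le> 1"
  shows "(1 - \<delta>) ^ x \<le> 1 - \<delta> * x + real x ^ 2 * \<delta> ^ 2 / 2"
proof (induction x)
  case (Suc x)
  have "(1 - \<delta>) ^ Suc x \<le> (1 - \<delta>) * (1 - \<delta> * x + real x ^ 2 * \<delta> ^ 2 / 2)"
    using Suc assms by (simp add: mult_left_mono)
  also have "\<dots> = 1 - \<delta> * Suc x + real (Suc x) ^ 2 * \<delta> ^ 2 / 2 - (\<delta> ^ 2 / 2 + real x ^ 2 * \<delta> ^ 3 / 2)"
    by (simp add: field_simps power2_eq_square power3_eq_cube)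
  also have "\<dots> \<le> 1 - \<delta> * Suc x + real (Suc x) ^ 2 * \<delta> ^ 2 / 2"
  proof -
    have "0 \<le> \<delta> ^ 2 / 2 + real x ^ 2 * \<delta> ^ 3 / 2" using assms by simp
    then show ?thesis by linarith
  qed
  finally show ?case .
qed simp

lemma extinction_step_bound:
  fixes q :: "'a set \<Rightarrow> real" and t :: "'a \<Rightarrow> real" and \<delta> :: real
  assumes "finite W" "\<And>S. S \<subseteq> W \<Longrightarrow> 0 \<le> q S" "(\<Sum>S\<in>Pow W. q S) = 1"
    and "\<And>w. w \<in> W \<Longrightarrow> 0 \<le> t w" "\<And>w. w \<in> W \<Longrightarrow> t w \<le> 1 - \<delta>" "0 \<le> \<delta>" "\<delta> \<le> 1"
    and mean: "1 + \<delta> * real (card W) ^ 2 / 2 \<le> (\<Sum>S\<in>Pow W. q S * card S)"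
  shows "(\<Sum>S\<in>Pow W. q S * (\<Prod>w\<in>S. t w)) \<le> 1 - \<delta>"
proof -
  let ?D = "real (card W)"
  define C where "C = 1 + ?D ^ 2 * \<delta> ^ 2 / 2"
  have prod_bound: "(\<Prod>w\<in>S. t w) \<le> C - \<delta> * card S" if "S \<subseteq> W" for S
  proof -
    have "(\<Prod>w\<in>S. t w) \<le> (1 - \<delta>) ^ card S"
      using that assms(4,5) prod_mono[of S t "\<lambda>_. 1 - \<delta>"] by auto
    also have "\<dots> \<le> 1 - \<delta> * card S + real (card S) ^ 2 * \<delta> ^ 2 / 2"
      using assms(6,7) by (rule one_minus_power_le)
    also have "real (card S) ^ 2 \<le> ?D ^ 2"
      using that assms(1) by (simp add: card_mono power_mono)
    then have "1 - \<delta> * card S + real (card S) ^ 2 * \<delta> ^ 2 / 2 \<le> 1 - \<delta> * card S + ?D ^ 2 * \<delta> ^ 2 / 2"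
      by (simp add: divide_right_mono mult_right_mono)
    finally show ?thesis by (simp add: C_def)
  qed
  have "(\<Sum>S\<in>Pow W. q S * (\<Prod>w\<in>S. t w)) \<le> (\<Sum>S\<in>Pow W. q S * (C - \<delta> * card S))"
    using assms(2) prod_bound by (intro sum_mono mult_left_mono) auto
  also have "\<dots> = (\<Sum>S\<in>Pow W. C * q S) - \<delta> * (\<Sum>S\<in>Pow W. q S * card S)"
    by (simp add: algebra_simps sum_subtractf sum_distrib_left)
  also have "\<dots> = 1 + ?D ^ 2 * \<delta> ^ 2 / 2 - \<delta> * (\<Sum>S\<in>Pow W. q S * card S)"
    using assms(3) by (simp add: C_def sum_distrib_left[symmetric])
  also have "\<dots> \<le> 1 - \<delta>"
    using mult_left_mono[OF mean assms(6)] by (simp add: algebra_simps power2_eq_square)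
  finally show ?thesis .
qed

section \<open>Cone percolation\<close>

locale cone_percolation = nat_indep_family M Rbar "tree_vertices d"
  for M :: "'a measure" and Rbar and d :: nat +
  fixes n :: nat and p :: "nat \<Rightarrow> nat pmf"
  assumes d_ge_2: "d \<ge> 2" and n_pos: "n > 0"
    and distr_Rbar: "\<And>u. u \<in> tree_vertices d \<Longrightarrow>
      distr M (count_space UNIV) (Rbar u) = measure_pmf (p (length u))"
begin

definition crossing_bound :: "nat \<Rightarrow> real" where
  "crossing_bound j = (\<Prod>k<n. 1 - (\<Prod>i\<le>k. measure_pmf.prob (p (j * n + i)) {r. r < k + 1 - i}))"

lemma prob_Rbar:
  assumes "u \<in> tree_vertices d"
  shows "prob {\<omega>\<in>space M. P (Rbar u \<omega>)} = measure_pmf.prob (p (length u)) {r. P r}"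
proof -
  have "measure_pmf.prob (p (length u)) {r. P r} = measure (distr M (count_space UNIV) (Rbar u)) {r. P r}"
    using distr_Rbar[OF assms] by simp
  also have "\<dots> = measure M (Rbar u -` {r. P r} \<inter> space M)"
    using measurable_X assms by (intro measure_distr) auto
  finally show ?thesis by (simp add: vimage_def Collect_conj_eq Int_commute)
qed

lemma prob_reached_at_level:
  assumes u: "u \<in> tree_vertices d" and w: "w \<in> block_words d n" and len: "length u = j * n"
    and "k < n"
  shows "prob (pred_event (\<lambda>r. \<exists>i\<le>k. k + 1 - i \<le> r (u @ take i w))) =
    1 - (\<Prod>i\<le>k. measure_pmf.prob (p (j * n + i)) {r. r < k + 1 - i})"
proof -
  let ?v = "\<lambda>i. u @ take i w"
  have v: "?v i \<in> tree_vertices d" "length (?v i) = j * n + i" if "i \<le> k" for i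
    using that assms by (auto simp: block_words_def intro: tree_vertices_append tree_vertices_take)
  have "prob (pred_event (\<lambda>r. \<forall>i\<in>{..k}. r (?v i) < k + 1 - i)) =
      (\<Prod>i\<in>{..k}. prob (pred_event (\<lambda>r. r (?v i) < k + 1 - i)))"
  proof (rule prob_Ball_indep[where K="\<lambda>i. {?v i}"])
    show "disjoint_family_on (\<lambda>i. {?v i}) {..k}"
      unfolding disjoint_family_on_def
    proof (intro ballI impI)
      fix i i' assume "i \<in> {..k}" "i' \<in> {..k}" "i \<noteq> i'"
      then have "length (?v i) \<noteq> length (?v i')" using v(2) by simp
      then show "{?v i} \<inter> {?v i'} = {}" by (metis disjoint_insert(1) inf_bot_right singletonD)
    qed
  qed (use v in \<open>auto intro: depends_only_onI\<close>)
  also have "\<dots> = (\<Prod>i\<le>k. measure_pmf.prob (p (j * n + i)) {r. r < k + 1 - i})"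
  proof (rule prod.cong[OF refl])
    fix i assume "i \<in> {..k}"
    then show "prob (pred_event (\<lambda>r. r (?v i) < k + 1 - i)) =
        measure_pmf.prob (p (j * n + i)) {r. r < k + 1 - i}"
      using prob_Rbar[OF v(1), of i "\<lambda>r. r < k + 1 - i"] v(2) by simp
  qed
  finally have complement: "prob (pred_event (\<lambda>r. \<forall>i\<in>{..k}. r (?v i) < k + 1 - i)) =
      (\<Prod>i\<le>k. measure_pmf.prob (p (j * n + i)) {r. r < k + 1 - i})" .
  have "pred_event (\<lambda>r. \<exists>i\<le>k. k + 1 - i \<le> r (?v i)) =
      space M - pred_event (\<lambda>r. \<forall>i\<in>{..k}. r (?v i) < k + 1 - i)"
    by (auto simp: not_le) (meson atMost_iff leD)
  moreover have "pred_event (\<lambda>r. \<forall>i\<in>{..k}. r (?v i) < k + 1 - i) \<in> events"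
    using v by (intro pred_event_in_events[of "?v ` {..k}"]) (auto simp: depends_only_on_def)
  ultimately show ?thesis using complement prob_compl by simp
qed

lemma prob_crosses_block_ge:
  assumes u: "u \<in> tree_vertices d" and w: "w \<in> block_words d n" and len: "length u = j * n"
  shows "crossing_bound j \<le> prob (pred_event (\<lambda>r. crosses_block n r u w))"
proof -
  let ?\<Phi> = "\<lambda>k r. \<exists>i\<le>k. k + 1 - i \<le> r (u @ take i w)"
  have "crossing_bound j = (\<Prod>k<n. prob (pred_event (?\<Phi> k)))"
    unfolding crossing_bound_def using prob_reached_at_level[OF assms] by simp
  also have "\<dots> \<le> prob (pred_event (\<lambda>r. \<forall>k\<in>{..<n}. ?\<Phi> k r))"
  proof (rule Harris_inequality[where S="(\<lambda>i. u @ take i w) ` {..<n}" and N=n])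
    show "(\<lambda>i. u @ take i w) ` {..<n} \<subseteq> tree_vertices d"
      using assms by (auto simp: block_words_def intro: tree_vertices_append tree_vertices_take)
    show "depends_only_on ((\<lambda>i. u @ take i w) ` {..<n}) (?\<Phi> k)" if "k \<in> {..<n}" for k
      using that unfolding depends_only_on_def by (metis (no_types, lifting) image_eqI le_less_trans lessThan_iff)
    show "mono (?\<Phi> k)" for k
      by (rule monoI) (auto simp: le_fun_def intro: order.trans)
    show "?\<Phi> k (\<lambda>v. min n (r v)) = ?\<Phi> k r" if "k \<in> {..<n}" for k r
      using that by auto
  qed auto
  also have "pred_event (\<lambda>r. \<forall>k\<in>{..<n}. ?\<Phi> k r) = pred_event (\<lambda>r. crosses_block n r u w)"
    unfolding crosses_block_def by (simp only: lessThan_iff Ball_def)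
  finally show ?thesis .
qed

lemma offspring_event_in_events:
  "u \<in> tree_vertices d \<Longrightarrow> pred_event (\<lambda>r. offspring d n r u = S) \<in> events"
  by (rule pred_event_in_events[OF finite_block_region block_region_subset offspring_depends_only_on])

lemma block_survives_event_in_events:
  "u \<in> tree_vertices d \<Longrightarrow> pred_event (\<lambda>r. block_survives d n m r u) \<in> events"
  by (rule pred_event_in_events[OF finite_block_region block_region_subset block_survives_depends_only_on])

lemma prob_not_block_survives:
  assumes "u \<in> tree_vertices d"
  shows "prob (pred_event (\<lambda>r. \<not> block_survives d n m r u)) =
    1 - prob (pred_event (\<lambda>r. block_survives d n m r u))"
proof -
  have "pred_event (\<lambda>r. \<not> block_survives d n m r u) =
      space M - pred_event (\<lambda>r. block_survives d n m r u)" by auto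
  then show ?thesis using prob_compl[OF block_survives_event_in_events[OF assms]] by simp
qed

lemma prob_eq_sum_offspring:
  assumes "u \<in> tree_vertices d" "A \<in> events"
  shows "prob A = (\<Sum>S\<in>Pow (block_words d n). prob (A \<inter> pred_event (\<lambda>r. offspring d n r u = S)))"
  using assms offspring_event_in_events offspring_subset finite_block_words
  by (intro prob_eq_sum_level_sets) auto

lemma prob_extinction_given_offspring:
  assumes u: "u \<in> tree_vertices d" and S: "S \<subseteq> block_words d n"
  shows "prob (pred_event (\<lambda>r. \<not> block_survives d n (Suc m) r u \<and> offspring d n r u = S)) =
    prob (pred_event (\<lambda>r. offspring d n r u = S)) *
    (\<Prod>w\<in>S. prob (pred_event (\<lambda>r. \<not> block_survives d n m r (u @ w))))"
proof -
  \<comment> \<open>None stands for the first block below u, Some w for the region below the child u @ w.\<close>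
  define \<Phi> where "\<Phi> = case_option (\<lambda>r. offspring d n r u = S) (\<lambda>w r. \<not> block_survives d n m r (u @ w))"
  define K where "K = case_option (block_region d n 1 u) (\<lambda>w. block_region d n m (u @ w))"
  define L where "L = insert None (Some ` S)"
  have child: "u @ w \<in> tree_vertices d" if "w \<in> block_words d n" for w
    using that u by (auto simp: block_words_def intro: tree_vertices_append)
  have "pred_event (\<lambda>r. \<not> block_survives d n (Suc m) r u \<and> offspring d n r u = S) =
      pred_event (\<lambda>r. \<forall>l\<in>L. \<Phi> l r)"
    unfolding L_def \<Phi>_def by (auto simp del: block_survives.simps simp: block_survives_Suc_iff_offspring)
  also have "prob \<dots> = (\<Prod>l\<in>L. prob (pred_event (\<Phi> l)))"
  proof (rule prob_Ball_indep[where K=K])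
    show "finite L" "L \<noteq> {}"
      using finite_subset[OF S finite_block_words] by (auto simp: L_def)
    show "finite (K l)" for l by (cases l) (auto simp: K_def finite_block_region)
    show "K l \<subseteq> tree_vertices d" if "l \<in> L" for l
      using that S child u by (cases l) (auto simp: K_def L_def intro!: block_region_subset)
    show "depends_only_on (K l) (\<Phi> l)" for l
      unfolding K_def \<Phi>_def
      by (cases l) (simp_all only: option.case offspring_depends_only_on
          depends_only_on_not[OF block_survives_depends_only_on])
    show "disjoint_family_on K L"
      unfolding disjoint_family_on_def L_def K_def
      using S block_regions_disjoint_child block_regions_disjoint_siblings
      by (auto simp: Int_commute) blast+
  qed
  also have "\<dots> = prob (pred_event (\<lambda>r. offspring d n r u = S)) *
      (\<Prod>w\<in>S. prob (pred_event (\<lambda>r. \<not> block_survives d n m r (u @ w))))"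
    unfolding L_def using finite_subset[OF S finite_block_words]
    by (subst prod.insert) (auto simp: prod.reindex \<Phi>_def)
  finally show ?thesis .
qed

lemma prob_extinction_eq:
  assumes u: "u \<in> tree_vertices d"
  shows "prob (pred_event (\<lambda>r. \<not> block_survives d n (Suc m) r u)) =
    (\<Sum>S\<in>Pow (block_words d n). prob (pred_event (\<lambda>r. offspring d n r u = S)) *
      (\<Prod>w\<in>S. prob (pred_event (\<lambda>r. \<not> block_survives d n m r (u @ w)))))"
proof -
  let ?E = "pred_event (\<lambda>r. \<not> block_survives d n (Suc m) r u)"
  have "?E \<in> events"
    by (rule pred_event_in_events[OF finite_block_region block_region_subset[OF u]
          depends_only_on_not[OF block_survives_depends_only_on]])
  then have "prob ?E = (\<Sum>S\<in>Pow (block_words d n). prob (?E \<inter> pred_event (\<lambda>r. offspring d n r u = S)))"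
    by (rule prob_eq_sum_offspring[OF u])
  also have "\<dots> = (\<Sum>S\<in>Pow (block_words d n). prob (pred_event (\<lambda>r. offspring d n r u = S)) *
      (\<Prod>w\<in>S. prob (pred_event (\<lambda>r. \<not> block_survives d n m r (u @ w)))))"
  proof (rule sum.cong[OF refl])
    fix S assume S: "S \<in> Pow (block_words d n)"
    have "?E \<inter> pred_event (\<lambda>r. offspring d n r u = S) =
        pred_event (\<lambda>r. \<not> block_survives d n (Suc m) r u \<and> offspring d n r u = S)"
      by blast
    also have "prob \<dots> = prob (pred_event (\<lambda>r. offspring d n r u = S)) *
        (\<Prod>w\<in>S. prob (pred_event (\<lambda>r. \<not> block_survives d n m r (u @ w))))"
      using S by (intro prob_extinction_given_offspring[OF u]) simp
    finally show "prob (?E \<inter> pred_event (\<lambda>r. offspring d n r u = S)) = \<dots>" .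
  qed
  finally show ?thesis .
qed

lemma sum_prob_offspring:
  assumes u: "u \<in> tree_vertices d"
  shows "(\<Sum>S\<in>Pow (block_words d n). prob (pred_event (\<lambda>r. offspring d n r u = S))) = 1"
  using prob_eq_sum_offspring[OF u sets.top] by (simp add: prob_space Int_absorb1)

lemma expected_offspring:
  assumes u: "u \<in> tree_vertices d"
  shows "(\<Sum>S\<in>Pow (block_words d n). prob (pred_event (\<lambda>r. offspring d n r u = S)) * card S) =
    (\<Sum>w\<in>block_words d n. prob (pred_event (\<lambda>r. crosses_block n r u w)))"
proof -
  let ?q = "\<lambda>S. prob (pred_event (\<lambda>r. offspring d n r u = S))"
  have "prob (pred_event (\<lambda>r. crosses_block n r u w)) = (\<Sum>S\<in>Pow (block_words d n). if w \<in> S then ?q S else 0)"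
    if w: "w \<in> block_words d n" for w
  proof -
    have "pred_event (\<lambda>r. crosses_block n r u w) \<in> events"
      by (rule pred_event_in_events[OF finite_block_region block_region_subset[OF u]
            crosses_block_depends_only_on[OF w]])
    then have "prob (pred_event (\<lambda>r. crosses_block n r u w)) =
        (\<Sum>S\<in>Pow (block_words d n). prob (pred_event (\<lambda>r. crosses_block n r u w) \<inter>
          pred_event (\<lambda>r. offspring d n r u = S)))"
      by (rule prob_eq_sum_offspring[OF u])
    also have "\<dots> = (\<Sum>S\<in>Pow (block_words d n). if w \<in> S then ?q S else 0)"
    proof (rule sum.cong[OF refl])
      fix S
      have "pred_event (\<lambda>r. crosses_block n r u w) \<inter> pred_event (\<lambda>r. offspring d n r u = S) =
          (if w \<in> S then pred_event (\<lambda>r. offspring d n r u = S) else {})"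
        using w by (auto simp: offspring_def)
      then show "prob (pred_event (\<lambda>r. crosses_block n r u w) \<inter> pred_event (\<lambda>r. offspring d n r u = S)) =
          (if w \<in> S then ?q S else 0)" by simp
    qed
    finally show ?thesis .
  qed
  then have "(\<Sum>w\<in>block_words d n. prob (pred_event (\<lambda>r. crosses_block n r u w))) =
      (\<Sum>S\<in>Pow (block_words d n). \<Sum>w\<in>block_words d n. if w \<in> S then ?q S else 0)"
    by (simp add: sum.swap[of _ "block_words d n"])
  also have "\<dots> = (\<Sum>S\<in>Pow (block_words d n). ?q S * card S)"
    using finite_block_words by (intro sum.cong refl) (simp add: sum.If_cases Int_absorb1)
  finally show ?thesis ..
qed

lemma survival_prob_ge:
  fixes \<delta> :: real
  assumes "0 \<le> \<delta>" "\<delta> \<le> 1"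
    and supercritical: "\<And>j. J \<le> j \<Longrightarrow> 1 + \<delta> * real (d ^ n) ^ 2 / 2 \<le> real (d ^ n) * crossing_bound j"
  shows "J \<le> j \<Longrightarrow> u \<in> tree_vertices d \<Longrightarrow> length u = j * n \<Longrightarrow>
    \<delta> \<le> prob (pred_event (\<lambda>r. block_survives d n m r u))"
proof (induction m arbitrary: j u)
  case 0
  then show ?case using assms(2) by (simp add: prob_space)
next
  case (Suc m)
  let ?W = "block_words d n"
  have child: "u @ w \<in> tree_vertices d" "length (u @ w) = Suc j * n" if "w \<in> ?W" for w
    using that Suc.prems by (auto simp: block_words_def intro: tree_vertices_append)
  have child_dies: "prob (pred_event (\<lambda>r. \<not> block_survives d n m r (u @ w))) \<le> 1 - \<delta>" if "w \<in> ?W" for w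
  proof -
    have "\<delta> \<le> prob (pred_event (\<lambda>r. block_survives d n m r (u @ w)))"
      using Suc.prems child[OF that] by (intro Suc.IH[of "Suc j"]) auto
    then show ?thesis using prob_not_block_survives[OF child(1)[OF that]] by simp
  qed
  have "1 + \<delta> * real (card ?W) ^ 2 / 2 \<le> (\<Sum>w\<in>?W. crossing_bound j)"
    using supercritical[OF Suc.prems(1)] by (simp add: card_block_words)
  also have "\<dots> \<le> (\<Sum>w\<in>?W. prob (pred_event (\<lambda>r. crosses_block n r u w)))"
    using Suc.prems by (intro sum_mono prob_crosses_block_ge) auto
  finally have mean: "1 + \<delta> * real (card ?W) ^ 2 / 2 \<le>
      (\<Sum>S\<in>Pow ?W. prob (pred_event (\<lambda>r. offspring d n r u = S)) * card S)"
    using expected_offspring[OF Suc.prems(2)] by simp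
  have "prob (pred_event (\<lambda>r. \<not> block_survives d n (Suc m) r u)) \<le> 1 - \<delta>"
    unfolding prob_extinction_eq[OF Suc.prems(2)]
    by (rule extinction_step_bound[OF finite_block_words _ sum_prob_offspring[OF Suc.prems(2)]
          _ child_dies assms(1,2) mean]) auto
  then show ?case using prob_not_block_survives[OF Suc.prems(2), of "Suc m"] by linarith
qed

lemma infinite_cone_reached_event_in_events:
  "pred_event (\<lambda>r. infinite (cone_reached d r)) \<in> events"
proof -
  have "pred_event (\<lambda>r. infinite (cone_reached d r)) =
      (\<Inter>m. pred_event (\<lambda>r. \<exists>v\<in>{v \<in> tree_vertices d. length v = m}. covered r v))"
    by (auto simp: infinite_cone_reached_iff)
  also have "\<dots> \<in> events"
  proof (rule sets.countable_INT)
    have "depends_only_on {v \<in> tree_vertices d. length v \<le> m}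
        (\<lambda>r. \<exists>v\<in>{v \<in> tree_vertices d. length v = m}. covered r v)" for m
      unfolding depends_only_on_def covered_def
      by (smt (verit) le_less_trans less_imp_le mem_Collect_eq tree_vertices_take length_take min.absorb4 order.refl)
    then show "range (\<lambda>m. pred_event (\<lambda>r. \<exists>v\<in>{v \<in> tree_vertices d. length v = m}. covered r v)) \<subseteq> events"
      by (auto intro!: pred_event_in_events[OF finite_tree_vertices_length_le])
  qed simp
  finally show ?thesis .
qed

lemma prob_open_zero_path_pos:
  assumes "\<And>z. pmf (p z) 0 < 1"
  shows "0 < prob (pred_event (open_zero_path k))"
proof (cases "k = 0")
  case True
  then show ?thesis by (simp add: prob_space open_zero_path_def)
next
  case False
  have zero_path: "replicate i 0 \<in> tree_vertices d" for i
    using d_ge_2 by (simp add: tree_vertices_def)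
  have "prob (pred_event (\<lambda>r. \<forall>i\<in>{..<k}. 1 \<le> r (replicate i 0))) =
      (\<Prod>i\<in>{..<k}. prob (pred_event (\<lambda>r. 1 \<le> r (replicate i 0))))"
    using False zero_path
    by (intro prob_Ball_indep[where K="\<lambda>i. {replicate i 0}"])
      (auto simp: disjoint_family_on_def depends_only_on_def)
  also have "\<dots> > 0"
  proof (rule prod_pos)
    fix i
    have "prob (pred_event (\<lambda>r. 1 \<le> r (replicate i 0))) = measure_pmf.prob (p i) (UNIV - {0})"
      using prob_Rbar[OF zero_path[of i], where P="\<lambda>r. 1 \<le> r"]
      by (simp add: Collect_neg_eq[symmetric] not_le Suc_le_eq set_diff_eq)
    also have "\<dots> = 1 - pmf (p i) 0"
      using measure_pmf.prob_compl[of "{0}" "p i"] by (simp add: measure_pmf_single)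
    finally show "0 < prob (pred_event (\<lambda>r. 1 \<le> r (replicate i 0)))" using assms[of i] by simp
  qed
  finally show ?thesis by (simp only: lessThan_iff Ball_def open_zero_path_def)
qed

lemma open_zero_path_and_survives_event_in_events:
  "pred_event (\<lambda>r. open_zero_path k r \<and> block_survives d n m r (replicate k 0)) \<in> events"
proof -
  let ?S = "(\<lambda>i. replicate i 0) ` {..<k} \<union> block_region d n m (replicate k 0)"
  have "replicate k 0 \<in> tree_vertices d" using d_ge_2 by (simp add: tree_vertices_def)
  then have "?S \<subseteq> tree_vertices d"
    using d_ge_2 block_region_subset zero_path_subset_tree_vertices[of d "{..<k}"] by auto
  moreover have "depends_only_on ?S (\<lambda>r. open_zero_path k r \<and> block_survives d n m r (replicate k 0))"
    by (intro depends_only_on_conj depends_only_on_mono[OF open_zero_path_depends_only_on]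
        depends_only_on_mono[OF block_survives_depends_only_on]) auto
  ultimately show ?thesis by (intro pred_event_in_events) (auto simp: finite_block_region)
qed

lemma prob_open_zero_path_and_survives:
  "prob (pred_event (\<lambda>r. open_zero_path k r \<and> block_survives d n m r (replicate k 0))) =
    prob (pred_event (open_zero_path k)) * prob (pred_event (\<lambda>r. block_survives d n m r (replicate k 0)))"
proof (rule prob_conj_indep[OF _ finite_block_region _ _ _ open_zero_path_depends_only_on
      block_survives_depends_only_on])
  show "(\<lambda>i. replicate i 0) ` {..<k} \<subseteq> tree_vertices d"
    using d_ge_2 by (intro zero_path_subset_tree_vertices) simp
  show "block_region d n m (replicate k 0) \<subseteq> tree_vertices d"
    using d_ge_2 by (intro block_region_subset) (simp add: tree_vertices_def)
  show "(\<lambda>i. replicate i 0) ` {..<k} \<inter> block_region d n m (replicate k 0) = {}"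
    by (auto simp: block_region_def dest: arg_cong[where f=length])
qed simp

text \<open>The zero path is opened up to depth J n, from where the block process is supercritical.\<close>

lemma prob_infinite_cone_reached_ge:
  fixes \<delta> :: real
  assumes "0 \<le> \<delta>" "\<delta> \<le> 1"
    and "\<And>j. J \<le> j \<Longrightarrow> 1 + \<delta> * real (d ^ n) ^ 2 / 2 \<le> real (d ^ n) * crossing_bound j"
  shows "prob (pred_event (open_zero_path (J * n))) * \<delta> \<le> prob (pred_event (\<lambda>r. infinite (cone_reached d r)))"
proof -
  define z where "z = replicate (J * n) (0::nat)"
  define H where "H m = pred_event (\<lambda>r. open_zero_path (J * n) r \<and> block_survives d n m r z)" for m
  have z: "z \<in> tree_vertices d" "length z = J * n" using d_ge_2 by (auto simp: z_def tree_vertices_def)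
  have "prob (pred_event (open_zero_path (J * n))) * \<delta> \<le> prob (H m)" for m
    unfolding H_def z_def prob_open_zero_path_and_survives
    using assms z by (intro mult_left_mono survival_prob_ge[where J=J]) (auto simp: z_def)
  moreover have "(\<lambda>m. prob (H m)) \<longlonglongrightarrow> prob (\<Inter>m. H m)"
  proof (rule finite_Lim_measure_decseq)
    show "range H \<subseteq> events"
      unfolding H_def z_def using open_zero_path_and_survives_event_in_events by blast
    show "decseq H"
    proof (rule decseq_SucI)
      fix m
      have "block_survives d n (Suc m) r z \<Longrightarrow> block_survives d n m r z" for r
        by (rule block_survives_Suc_imp)
      then show "H (Suc m) \<subseteq> H m" unfolding H_def by (auto simp del: block_survives.simps)
    qed
  qed
  ultimately have "prob (pred_event (open_zero_path (J * n))) * \<delta> \<le> prob (\<Inter>m. H m)"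
    by (intro LIMSEQ_le_const) auto
  also have "\<dots> \<le> prob (pred_event (\<lambda>r. infinite (cone_reached d r)))"
  proof (rule finite_measure_mono[OF _ infinite_cone_reached_event_in_events], rule subsetI)
    fix \<omega> assume "\<omega> \<in> (\<Inter>m. H m)"
    then have "\<omega> \<in> H m" for m by blast
    then have \<omega>: "\<omega> \<in> space M" "open_zero_path (J * n) (\<lambda>i. Rbar i \<omega>)"
      "block_survives d n m (\<lambda>i. Rbar i \<omega>) z" for m
      unfolding H_def by blast+
    have "infinite (cone_reached d (\<lambda>i. Rbar i \<omega>))"
      using n_pos z(1) covered_if_open_zero_path[OF \<omega>(2)] \<omega>(3) unfolding z_def
      by (rule infinite_cone_reached_if_block_survives)
    with \<omega>(1) show "\<omega> \<in> pred_event (\<lambda>r. infinite (cone_reached d r))" by blast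
  qed
  finally show ?thesis .
qed

lemma prob_infinite_cone_reached_pos:
  assumes "\<And>z. pmf (p z) 0 < 1" and "liminf (\<lambda>j. ereal (real d ^ n * crossing_bound j)) > 1"
  shows "0 < prob (pred_event (\<lambda>r. infinite (cone_reached d r)))"
proof -
  obtain c J where "1 < c" and c: "\<And>j. J \<le> j \<Longrightarrow> c \<le> real d ^ n * crossing_bound j"
    using liminf_gt_one_eventually_ge[OF assms(2)] by blast
  have "d ^ 1 \<le> d ^ n" using d_ge_2 n_pos by (intro power_increasing) auto
  then have "real 2 \<le> real (d ^ n)" using d_ge_2 by (simp only: of_nat_le_iff) simp
  then obtain \<delta> where \<delta>: "0 < \<delta>" "\<delta> \<le> 1" "1 + \<delta> * real (d ^ n) ^ 2 / 2 \<le> c"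
    using supercritical_margin[OF \<open>1 < c\<close>] by auto
  have "0 < prob (pred_event (open_zero_path (J * n))) * \<delta>"
    using prob_open_zero_path_pos[OF assms(1)] \<delta>(1) by simp
  also have "\<dots> \<le> prob (pred_event (\<lambda>r. infinite (cone_reached d r)))"
    using \<delta> c by (intro prob_infinite_cone_reached_ge) (auto intro: order.trans)
  finally show ?thesis .
qed

end

theorem theorem4:
  fixes d n :: nat
    and p :: "nat \<Rightarrow> nat pmf"
    and M :: "'a measure"
    and Rbar :: "nat list \<Rightarrow> 'a \<Rightarrow> nat"
  assumes "d \<ge> 2"
    and "prob_space M"
    and "\<And>z. pmf (p z) 0 < 1"
    and "prob_space.indep_vars M (\<lambda>_. count_space UNIV) Rbar (tree_vertices d)"
    and "\<And>u. u \<in> tree_vertices d \<Longrightarrow>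
           distr M (count_space UNIV) (Rbar u) = measure_pmf (p (length u))"
    and "n > 0"
    and "liminf (\<lambda>j. ereal (real d ^ n * (\<Prod>k<n. 1 - (\<Prod>i\<le>k.
           measure_pmf.prob (p (j * n + i)) {r. r < k + 1 - i})))) > 1"
  shows "measure M {\<omega> \<in> space M. infinite (cone_reached d (\<lambda>u. Rbar u \<omega>))} > 0"
proof -
  have "nat_indep_family M Rbar (tree_vertices d)"
    using assms(2,4) by (simp add: nat_indep_family_def nat_indep_family_axioms_def)
  then interpret cone_percolation M Rbar d n p
    using assms(1,5,6) by (simp add: cone_percolation_def cone_percolation_axioms_def)
  show ?thesis
    using prob_infinite_cone_reached_pos[OF assms(3)] assms(7) by (simp add: crossing_bound_def)
qed

end
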